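(* Let $X$ be a proper metric space with $\operatorname{trasind} X=\alpha$ for some ordinal number $\alpha$. Then for each ordinal $\beta<\alpha$ there exists a subset $X_\beta\subset X$ (with the restricted metric) such that $\operatorname{trasind} X_\beta=\beta$.
   Context: A metric space is proper if every closed ball is compact; each such space $X$ has a fixed base point $x_0$, with metric $d$. A map $\phi:X\to[0,1]$ is slowly oscillating if for every $r>0$ and $\varepsilon>0$ there is $D>0$ with $\operatorname{diam}\phi(B_r(x))<\varepsilon$ whenever $d(x,x_0)\ge D$, where $B_r(x)$ is the open $r$-ball. The Higson compactification $cX$ is the closure of the image of $X$ under $x\mapsto(\phi(x))_{\phi\in C_h(X)}\in[0,1]^{C_h(X)}$, where $C_h(X)$ is the set of continuous slowly oscillating maps $X\to[0,1]$; the Higson corona is $\nu X=cX\setminus X$. For $C\subset X$, $C'=\operatorname{cl}_{cX}C\cap\nu X$. A partition between disjoint closed sets $P,Q$ of a space $Z$ is a set $S\subset Z$ such that $Z\setminus S=U_1\cup U_2$ with $U_1,U_2$ disjoint open, $P\subset U_1$, $Q\subset U_2$. For $x\in\nu X$ and $A\subset X$ with $x\notin A'$, a set $C\subset X$ is an asymptotic separator for $x$ and $A$ if $C'$ is a partition between $\{x\}$ and $A'$ in $\nu X$. The transfinite dimension $\operatorname{trasind}$: $\operatorname{trasind} X=-1$ iff $X$ is bounded; for an ordinal $\alpha$, $\operatorname{trasind} X\le\alpha$ iff for every $x\in\nu X$ and $A\subset X$ with $x\notin A'$ there is an asymptotic separator $C$ for $x$ and $A$ with $\operatorname{trasind} C\le\beta$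 for some $\beta<\alpha$; $\operatorname{trasind} X=\alpha$ iff $\operatorname{trasind} X\le\alpha$ but not $\operatorname{trasind}X\le\beta$ for any $\beta<\alpha$; $\operatorname{trasind} X=\infty$ if $\operatorname{trasind} X\le\alpha$ holds for no ordinal $\alpha$. *)

theory Defs
  imports "HOL-Analysis.Analysis"
begin

text \<open>A (sub)space is given by a carrier set S of a metric space type, with the
restricted metric.  x0 is the base point (the notions below do not depend on it).\<close>

definition slowly_osc :: "'a::metric_space \<Rightarrow> 'a set \<Rightarrow> ('a \<Rightarrow> real) \<Rightarrow> bool" where
  "slowly_osc x0 S \<phi> \<longleftrightarrow>
     (\<forall>r>0. \<forall>\<epsilon>>0. \<exists>D>0. \<forall>x\<in>S. dist x x0 \<ge> D \<longrightarrow> diameter (\<phi> ` (ball x r \<inter> S)) < \<epsilon>)"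

definition higson_fns :: "'a::metric_space \<Rightarrow> 'a set \<Rightarrow> ('a \<Rightarrow> real) set" where
  "higson_fns x0 S = {\<phi>. continuous_on S \<phi> \<and> \<phi> ` S \<subseteq> {0..1} \<and> slowly_osc x0 S \<phi>
                          \<and> (\<forall>x. x \<notin> S \<longrightarrow> \<phi> x = 0)}"

definition higson_emb :: "'a::metric_space \<Rightarrow> 'a set \<Rightarrow> 'a \<Rightarrow> (('a \<Rightarrow> real) \<Rightarrow> real)" where
  "higson_emb x0 S x = restrict (\<lambda>\<phi>. \<phi> x) (higson_fns x0 S)"

definition higson_top :: "'a::metric_space \<Rightarrow> 'a set \<Rightarrow> (('a \<Rightarrow> real) \<Rightarrow> real) topology" where
  "higson_top x0 S = product_topology (\<lambda>_. top_of_set {0..1::real}) (higson_fns x0 S)"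

definition higson_compactification :: "'a::metric_space \<Rightarrow> 'a set \<Rightarrow> (('a \<Rightarrow> real) \<Rightarrow> real) set" where
  "higson_compactification x0 S = higson_top x0 S closure_of (higson_emb x0 S ` S)"

definition higson_corona :: "'a::metric_space \<Rightarrow> 'a set \<Rightarrow> (('a \<Rightarrow> real) \<Rightarrow> real) set" where
  "higson_corona x0 S = higson_compactification x0 S - higson_emb x0 S ` S"

definition corona_trace :: "'a::metric_space \<Rightarrow> 'a set \<Rightarrow> 'a set \<Rightarrow> (('a \<Rightarrow> real) \<Rightarrow> real) set" where
  "corona_trace x0 S C = (higson_top x0 S closure_of (higson_emb x0 S ` C)) \<inter> higson_corona x0 S"

definition is_partition_between :: "'b topology \<Rightarrow> 'b set \<Rightarrow> 'b set \<Rightarrow> 'b set \<Rightarrow> bool" where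
  "is_partition_between T L P Q \<longleftrightarrow>
     (\<exists>U1 U2. openin T U1 \<and> openin T U2 \<and> U1 \<inter> U2 = {} \<and>
              topspace T - L = U1 \<union> U2 \<and> P \<subseteq> U1 \<and> Q \<subseteq> U2)"

definition asymptotic_separator ::
  "'a::metric_space \<Rightarrow> 'a set \<Rightarrow> 'a set \<Rightarrow> (('a \<Rightarrow> real) \<Rightarrow> real) \<Rightarrow> 'a set \<Rightarrow> bool" where
  "asymptotic_separator x0 S C x A \<longleftrightarrow>
     is_partition_between (subtopology (higson_top x0 S) (higson_corona x0 S))
        (corona_trace x0 S C) {x} (corona_trace x0 S A)"

text \<open>Ordinals are represented by a well-order r: None stands for -1, Some a for the
ordinal type of the strict initial segment of r below a.  trasind_le r x0 S \<beta> means
trasind S \<le> \<beta>.\<close>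
inductive trasind_le :: "('o \<times> 'o) set \<Rightarrow> 'a::metric_space \<Rightarrow> 'a set \<Rightarrow> 'o option \<Rightarrow> bool"
  for r x0 where
  bounded: "bounded S \<Longrightarrow> trasind_le r x0 S None"
| step: "a \<in> Field r \<Longrightarrow>
     (\<forall>x\<in>higson_corona x0 S. \<forall>A. A \<subseteq> S \<longrightarrow> x \<notin> corona_trace x0 S A \<longrightarrow>
        (\<exists>C. C \<subseteq> S \<and> asymptotic_separator x0 S C x A \<and>
             (trasind_le r x0 C None \<or> (\<exists>b. (b, a) \<in> r \<and> b \<noteq> a \<and> trasind_le r x0 C (Some b)))))
     \<Longrightarrow> trasind_le r x0 S (Some a)"

definition trasind_eq :: "('o \<times> 'o) set \<Rightarrow> 'a::metric_space \<Rightarrow> 'a set \<Rightarrow> 'o \<Rightarrow> bool" where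
  "trasind_eq r x0 S a \<longleftrightarrow> trasind_le r x0 S (Some a) \<and> \<not> trasind_le r x0 S None \<and>
     (\<forall>b. (b, a) \<in> r \<and> b \<noteq> a \<longrightarrow> \<not> trasind_le r x0 S (Some b))"

end

theory Submission
  imports Defs
begin

text \<open>Since \<open>trasind S \<le> \<beta>\<close> fails, some point
  \<open>x\<close> of the corona and some \<open>A\<close> admit no asymptotic separator of dimension \<open>< \<beta>\<close>, whereas
  \<open>trasind S \<le> \<alpha>\<close> provides one, \<open>C\<close>, of dimension \<open>< \<alpha>\<close>.  Hence \<open>C\<close> is unbounded and
  \<open>\<beta> \<le> trasind C < \<alpha>\<close>; either \<open>trasind C = \<beta>\<close> or well-founded induction on \<open>\<alpha>\<close> applies to \<open>C\<close>.\<close>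

lemma well_order_le_or_less:
  assumes "Well_order r" "a \<in> Field r" "b \<in> Field r"
  shows "(a, b) \<in> r \<or> (b, a) \<in> r - Id"
  using assms unfolding well_order_on_def linear_order_on_def partial_order_on_def
    preorder_on_def total_on_def refl_on_def by (cases "a = b") auto

lemma well_order_le_less_trans:
  assumes "Well_order r" "(a, b) \<in> r" "(b, c) \<in> r" "b \<noteq> c"
  shows "(a, c) \<in> r \<and> a \<noteq> c"
  using assms unfolding well_order_on_def linear_order_on_def partial_order_on_def
    preorder_on_def trans_def antisym_def by blast

definition trasind_less :: "('o \<times> 'o) set \<Rightarrow> 'a::metric_space \<Rightarrow> 'a set \<Rightarrow> 'o \<Rightarrow> bool" where
  "trasind_less r x0 C a \<longleftrightarrow>
     trasind_le r x0 C None \<or> (\<exists>b. (b, a) \<in> r \<and> b \<noteq> a \<and> trasind_le r x0 C (Some b))"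

definition has_separators_below :: "('o \<times> 'o) set \<Rightarrow> 'a::metric_space \<Rightarrow> 'a set \<Rightarrow> 'o \<Rightarrow> bool" where
  "has_separators_below r x0 S a \<longleftrightarrow>
     (\<forall>x\<in>higson_corona x0 S. \<forall>A. A \<subseteq> S \<longrightarrow> x \<notin> corona_trace x0 S A \<longrightarrow>
        (\<exists>C. C \<subseteq> S \<and> asymptotic_separator x0 S C x A \<and> trasind_less r x0 C a))"

lemma trasind_le_None_iff: "trasind_le r x0 S None \<longleftrightarrow> bounded S"
  by (auto elim: trasind_le.cases intro: trasind_le.bounded)

lemma trasind_le_Some_iff:
  "trasind_le r x0 S (Some a) \<longleftrightarrow> a \<in> Field r \<and> has_separators_below r x0 S a"
  unfolding has_separators_below_def trasind_less_def
  by (auto elim: trasind_le.cases intro: trasind_le.step)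

lemma trasind_le_Some_Field: "trasind_le r x0 S (Some a) \<Longrightarrow> a \<in> Field r"
  by (simp add: trasind_le_Some_iff)

lemma not_trasind_le_SomeE:
  assumes "\<not> trasind_le r x0 S (Some b)" and "b \<in> Field r"
  obtains x A where "x \<in> higson_corona x0 S" "A \<subseteq> S" "x \<notin> corona_trace x0 S A"
    and "\<And>C. C \<subseteq> S \<Longrightarrow> asymptotic_separator x0 S C x A \<Longrightarrow> \<not> trasind_less r x0 C b"
  using assms unfolding trasind_le_Some_iff has_separators_below_def by blast

lemma trasind_eq_least:
  assumes wo: "Well_order r"
    and le: "trasind_le r x0 C (Some c)" and unbounded: "\<not> bounded C"
  obtains c' where "(c', c) \<in> r" "trasind_eq r x0 C c'"
proof -
  have wf: "wf (r - Id)" using wo by (simp add: well_order_on_def)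
  obtain c' where c': "trasind_le r x0 C (Some c')"
    and least: "\<And>d. (d, c') \<in> r - Id \<Longrightarrow> \<not> trasind_le r x0 C (Some d)"
    using wfE_min[OF wf, where x=c and Q="{d. trasind_le r x0 C (Some d)}"] le by auto
  have "(c', c) \<in> r"
  proof (rule ccontr)
    assume "(c', c) \<notin> r"
    with well_order_le_or_less[OF wo] have "(c, c') \<in> r - Id"
      using trasind_le_Some_Field[OF le] trasind_le_Some_Field[OF c'] by blast
    from least[OF this] le show False by contradiction
  qed
  moreover have "trasind_eq r x0 C c'"
    using c' least unbounded by (simp add: trasind_eq_def trasind_le_None_iff)
  ultimately show thesis by (rule that)
qed

lemma trasind_eq_ge_of_not_less:
  assumes wo: "Well_order r" and b: "b \<in> Field r"
    and eq: "trasind_eq r x0 C c" and not_less: "\<not> trasind_less r x0 C b"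
  shows "(b, c) \<in> r"
proof -
  have "c \<in> Field r" "trasind_le r x0 C (Some c)"
    using eq trasind_le_Some_Field by (auto simp: trasind_eq_def)
  with b not_less show ?thesis
    using well_order_le_or_less[OF wo] unfolding trasind_less_def by blast
qed

lemma trasind_eq_separator_between:
  assumes wo: "Well_order r" and eq: "trasind_eq r x0 S a"
    and ba: "(b, a) \<in> r" "b \<noteq> a"
  obtains C c where "C \<subseteq> S" "trasind_eq r x0 C c" "(b, c) \<in> r" "(c, a) \<in> r" "c \<noteq> a"
proof -
  have b: "b \<in> Field r" using ba by (auto simp: Field_def)
  have "\<not> trasind_le r x0 S (Some b)" and "has_separators_below r x0 S a"
    using eq ba by (auto simp: trasind_eq_def trasind_le_Some_iff)
  obtain x A where x: "x \<in> higson_corona x0 S" and A: "A \<subseteq> S" "x \<notin> corona_trace x0 S A"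
    and no_small: "\<And>C. C \<subseteq> S \<Longrightarrow> asymptotic_separator x0 S C x A \<Longrightarrow> \<not> trasind_less r x0 C b"
    using not_trasind_le_SomeE[OF \<open>\<not> trasind_le r x0 S (Some b)\<close> b] by blast
  obtain C where C: "C \<subseteq> S" "asymptotic_separator x0 S C x A" "trasind_less r x0 C a"
    using \<open>has_separators_below r x0 S a\<close> x A unfolding has_separators_below_def by blast
  have not_less: "\<not> trasind_less r x0 C b" using no_small C by blast
  then obtain d where d: "(d, a) \<in> r" "d \<noteq> a" "trasind_le r x0 C (Some d)"
    and unbounded: "\<not> bounded C"
    using C(3) by (auto simp: trasind_less_def trasind_le_None_iff)
  obtain c where dc: "(c, d) \<in> r" and c: "trasind_eq r x0 C c"
    using trasind_eq_least[OF wo d(3) unbounded] by blast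
  have "(c, a) \<in> r" "c \<noteq> a"
    using well_order_le_less_trans[OF wo dc] d by auto
  then show thesis
    using that C(1) c trasind_eq_ge_of_not_less[OF wo b c not_less] by blast
qed

lemma trasind_eq_subset_exists:
  assumes wo: "Well_order r" and "trasind_eq r x0 S a" "(b, a) \<in> r" "b \<noteq> a"
  shows "\<exists>Y\<subseteq>S. trasind_eq r x0 Y b"
proof -
  have "wf (r - Id)" using wo by (simp add: well_order_on_def)
  then show ?thesis using assms(2-)
  proof (induction a arbitrary: S rule: wf_induct_rule)
    case (less a)
    obtain C c where C: "C \<subseteq> S" "trasind_eq r x0 C c" "(b, c) \<in> r" "(c, a) \<in> r" "c \<noteq> a"
      using trasind_eq_separator_between[OF wo less.prems] by blast
    show ?case
    proof (cases "b = c")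
      case True
      then show ?thesis using C by blast
    next
      case False
      then obtain Y where "Y \<subseteq> C" "trasind_eq r x0 Y b"
        using less.IH[of c C] C by blast
      then show ?thesis using C(1) by blast
    qed
  qed
qed

theorem lemma1:
  fixes x0 :: "'a::metric_space" and r :: "('o \<times> 'o) set" and a :: 'o
  assumes proper: "\<forall>(x::'a) e. compact (cball x e)"
    and wo: "Well_order r" and a: "a \<in> Field r"
    and dim: "trasind_eq r x0 (UNIV :: 'a set) a"
  shows "\<forall>b. (b, a) \<in> r \<and> b \<noteq> a \<longrightarrow> (\<exists>Y :: 'a set. trasind_eq r x0 Y b)"
  using trasind_eq_subset_exists[OF wo dim] by blast

end
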